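(* Let $E$ be a real topological vector space, $\Omega$ a nonempty open subset of $E$, and $f_0,\dots,f_m:\Omega\to\mathbb{R}$. Let $\hat{x}$ be a solution of the problem $(\mathcal{P}_1)$: maximize $f_0(x)$ subject to $x\in\Omega$ and $f_i(x)\ge0$ for all $i\in\{1,\dots,m\}$. Assume that $f_j$ is lower semicontinuous at $\hat{x}$ for every $j\in\{1,\dots,m\}$ with $f_j(\hat{x})>0$, that each $f_i$ ($0\le i\le m$) is $D^-_M$-differentiable at $\hat{x}$, and that, after reindexing, $\{i\in\{1,\dots,m\}:f_i(\hat{x})=0\}=\{1,\dots,l\}$ with $l\ge1$. For $p\in\{0,\dots,l\}$ let $A_p=\{u\in E: D^-_Mf_i(\hat{x})(u)>0\ \text{for all } i\in\{p,\dots,l\}\}$. If $A_l\neq\emptyset$, then $A_0=\emptyset$; equivalently, $k:=\min\{i\in\{0,\dots,l\}:A_i\neq\emptyset\}$ satisfies $k\ge1$.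
   Context: $D^-f(x)(u):=\liminf_{t\to0^+}\frac{f(x+tu)-f(x)}{t}$ (with $D^-f(x)(0)=0$); $D^-_Mf(x)(u):=\inf_{w\in E}\{D^-f(x)(u+w)-D^-f(x)(w)\}$; $f$ is $D^-_M$-differentiable at $x$ if both are finite for every $u\in E$. *)

theory Defs
  imports "HOL-Analysis.Analysis"
begin

class real_tvs = real_vector + topological_space +
  assumes tvs_add_continuous:
    "\<And>U a b. open U \<Longrightarrow> a + b \<in> U \<Longrightarrow>
       \<exists>V W. open V \<and> open W \<and> a \<in> V \<and> b \<in> W \<and> (\<forall>y\<in>V. \<forall>z\<in>W. y + z \<in> U)"
  assumes tvs_scaleR_continuous:
    "\<And>U r a. open U \<Longrightarrow> r *\<^sub>R a \<in> U \<Longrightarrow>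
       \<exists>e>0. \<exists>W. open W \<and> a \<in> W \<and> (\<forall>s. \<bar>s - r\<bar> < e \<longrightarrow> (\<forall>y\<in>W. s *\<^sub>R y \<in> U))"

definition lsc_at :: "('a::topological_space \<Rightarrow> real) \<Rightarrow> 'a \<Rightarrow> bool" where
  "lsc_at f x \<longleftrightarrow> (\<forall>e>0. \<forall>\<^sub>F y in nhds x. f x - e < f y)"

definition dini_lower :: "('a::real_vector \<Rightarrow> real) \<Rightarrow> 'a \<Rightarrow> 'a \<Rightarrow> ereal" where
  "dini_lower f x u =
     (if u = 0 then 0
      else Liminf (at_right (0::real)) (\<lambda>t. ereal ((f (x + t *\<^sub>R u) - f x) / t)))"

definition dini_M :: "('a::real_vector \<Rightarrow> real) \<Rightarrow> 'a \<Rightarrow> 'a \<Rightarrow> ereal" where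
  "dini_M f x u = (INF w. dini_lower f x (u + w) - dini_lower f x w)"

definition dini_M_differentiable :: "('a::real_vector \<Rightarrow> real) \<Rightarrow> 'a \<Rightarrow> bool" where
  "dini_M_differentiable f x \<longleftrightarrow>
     (\<forall>u. \<bar>dini_lower f x u\<bar> \<noteq> \<infinity> \<and> \<bar>dini_M f x u\<bar> \<noteq> \<infinity>)"

end

theory Submission
  imports Defs
begin

(* If some direction u lay in A 0, then along the ray xh + t u, for all small t > 0, the
   objective and every active constraint would strictly increase (a positive D^-_M derivative
   bounds the lower Dini derivative from below, taking w = 0), the inactive constraints would
   stay positive by lower semicontinuity, and the point would stay in the open set \<Omega>.
   Such a point is feasible with a larger objective value, contradicting maximality of xh. *)

lemma tvs_isCont_ray:
  fixes x u :: "'a::real_tvs" and t0 :: real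
  shows "isCont (\<lambda>t. x + t *\<^sub>R u) t0"
  unfolding isCont_def
proof (rule topological_tendstoI)
  fix S assume "open S" "x + t0 *\<^sub>R u \<in> S"
  then obtain V W where VW: "open V" "open W" "x \<in> V" "t0 *\<^sub>R u \<in> W"
      "\<forall>y\<in>V. \<forall>z\<in>W. y + z \<in> S"
    using tvs_add_continuous[of S x "t0 *\<^sub>R u"] by auto
  then obtain e W' where "e > 0" "u \<in> W'" "\<forall>s. \<bar>s - t0\<bar> < e \<longrightarrow> (\<forall>y\<in>W'. s *\<^sub>R y \<in> W)"
    using tvs_scaleR_continuous[of W t0 u] by auto
  with VW show "\<forall>\<^sub>F t in at t0. x + t *\<^sub>R u \<in> S"
    unfolding eventually_at by (intro exI[of _ e]) (auto simp: dist_real_def)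
qed

lemma tvs_eventually_along_ray:
  fixes x u :: "'a::real_tvs"
  assumes "eventually P (nhds x)"
  shows "\<forall>\<^sub>F t in at_right (0::real). P (x + t *\<^sub>R u)"
proof -
  have "((\<lambda>t. x + t *\<^sub>R u) \<longlongrightarrow> x) (at 0)"
    using tvs_isCont_ray[of 0 x u] by (simp add: isCont_def)
  then have "((\<lambda>t. x + t *\<^sub>R u) \<longlongrightarrow> x) (at_right 0)"
    by (rule tendsto_mono[rotated]) (simp add: at_le)
  then show ?thesis
    using assms by (simp add: filterlim_iff)
qed

lemma lsc_at_eventually_greater:
  assumes "lsc_at f x" "c < f x"
  shows "\<forall>\<^sub>F y in nhds x. c < f y"
proof -
  have "\<forall>\<^sub>F y in nhds x. f x - (f x - c) < f y"
    using assms(1)[unfolded lsc_at_def, rule_format, of "f x - c"] assms(2) by simp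
  then show ?thesis
    by simp
qed

lemma dini_M_le_dini_lower: "dini_M f x u \<le> dini_lower f x u"
proof -
  have "dini_M f x u \<le> dini_lower f x (u + 0) - dini_lower f x 0"
    unfolding dini_M_def by (rule INF_lower) simp
  then show ?thesis
    by (simp add: dini_lower_def)
qed

lemma dini_lower_pos_eventually_increasing:
  assumes "0 < dini_lower f x u"
  shows "\<forall>\<^sub>F t in at_right (0::real). f x < f (x + t *\<^sub>R u)"
proof -
  have "u \<noteq> 0"
    using assms by (auto simp: dini_lower_def)
  with assms have "0 < Liminf (at_right (0::real)) (\<lambda>t. ereal ((f (x + t *\<^sub>R u) - f x) / t))"
    by (simp add: dini_lower_def)
  then have "\<forall>\<^sub>F t in at_right (0::real). 0 < (f (x + t *\<^sub>R u) - f x) / t"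
    using less_LiminfD by fastforce
  with eventually_at_right_less[of "0::real"] show ?thesis
    by eventually_elim (simp add: zero_less_divide_iff)
qed

lemma dini_M_pos_eventually_increasing:
  assumes "0 < dini_M f x u"
  shows "\<forall>\<^sub>F t in at_right (0::real). f x < f (x + t *\<^sub>R u)"
  using assms dini_M_le_dini_lower[of f x u]
  by (intro dini_lower_pos_eventually_increasing) simp

lemma maximizer_no_dini_M_ascent_direction:
  fixes f :: "nat \<Rightarrow> 'a::real_tvs \<Rightarrow> real"
  assumes "open \<Omega>" "xh \<in> \<Omega>"
    and feasible: "\<forall>i\<in>{1..m}. f i xh \<ge> 0"
    and maximal: "\<forall>x\<in>\<Omega>. (\<forall>i\<in>{1..m}. f i x \<ge> 0) \<longrightarrow> f 0 x \<le> f 0 xh"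
    and lsc: "\<forall>i\<in>{1..m}. f i xh > 0 \<longrightarrow> lsc_at (f i) xh"
    and ascent_objective: "dini_M (f 0) xh u > 0"
    and ascent_active: "\<forall>i\<in>{1..m}. f i xh = 0 \<longrightarrow> dini_M (f i) xh u > 0"
  shows False
proof -
  have constraint: "\<forall>\<^sub>F t in at_right (0::real). f i (xh + t *\<^sub>R u) \<ge> 0" if "i \<in> {1..m}" for i
  proof (cases "f i xh = 0")
    case True
    then show ?thesis
      using that ascent_active dini_M_pos_eventually_increasing[of "f i" xh u]
      by (auto elim: eventually_mono)
  next
    case False
    with that feasible have "f i xh > 0"
      by force
    with that lsc have "\<forall>\<^sub>F y in nhds xh. 0 < f i y"
      by (intro lsc_at_eventually_greater) auto
    then have "\<forall>\<^sub>F t in at_right (0::real). 0 < f i (xh + t *\<^sub>R u)"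
      by (rule tvs_eventually_along_ray)
    then show ?thesis
      by (rule eventually_mono) simp
  qed
  have "\<forall>\<^sub>F t in at_right (0::real). xh + t *\<^sub>R u \<in> \<Omega>"
    using assms(1,2) by (intro tvs_eventually_along_ray eventually_nhds_in_open)
  moreover have "\<forall>\<^sub>F t in at_right (0::real). \<forall>i\<in>{1..m}. f i (xh + t *\<^sub>R u) \<ge> 0"
    using constraint by (intro eventually_ball_finite) auto
  moreover have "\<forall>\<^sub>F t in at_right (0::real). f 0 xh < f 0 (xh + t *\<^sub>R u)"
    using ascent_objective by (rule dini_M_pos_eventually_increasing)
  ultimately have "\<forall>\<^sub>F t in at_right (0::real). False"
    by eventually_elim (use maximal in force)
  then show False
    by simp
qed

theorem lemma3p7:
  fixes f :: "nat \<Rightarrow> 'a::real_tvs \<Rightarrow> real"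
    and \<Omega> :: "'a set" and xh :: 'a and m l :: nat
    and A :: "nat \<Rightarrow> 'a set"
  assumes "open \<Omega>" and "\<Omega> \<noteq> {}"
    and sol_feas: "xh \<in> \<Omega>" "\<forall>i\<in>{1..m}. f i xh \<ge> 0"
    and sol_max: "\<forall>x\<in>\<Omega>. (\<forall>i\<in>{1..m}. f i x \<ge> 0) \<longrightarrow> f 0 x \<le> f 0 xh"
    and lsc: "\<forall>j\<in>{1..m}. f j xh > 0 \<longrightarrow> lsc_at (f j) xh"
    and diff: "\<forall>i\<in>{0..m}. dini_M_differentiable (f i) xh"
    and active: "{i\<in>{1..m}. f i xh = 0} = {1..l}" and "l \<ge> 1"
    and A_def: "\<forall>p\<in>{0..l}. A p = {u. \<forall>i\<in>{p..l}. dini_M (f i) xh u > 0}"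
    and "A l \<noteq> {}"
  shows "A 0 = {}"
proof (rule ccontr)
  assume "A 0 \<noteq> {}"
  then obtain u where "\<forall>i\<in>{0..l}. dini_M (f i) xh u > 0"
    using A_def by auto
  moreover have "\<forall>i\<in>{1..m}. f i xh = 0 \<longrightarrow> i \<in> {0..l}"
    using active by auto
  ultimately show False
    using maximizer_no_dini_M_ascent_direction[OF \<open>open \<Omega>\<close> sol_feas sol_max lsc, of u]
    by auto
qed

end
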